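(* For integers $\alpha\geq k\geq 2$, we have $\alpha-1+(k-1)\left\lfloor\frac{\alpha-1}{k-1}\right\rfloor\leq \tau(k,\alpha)\leq 2\alpha-2$.
   Context: For integers $k,\alpha\geq1$, $\tau(k,\alpha)$ is the largest integer $n$ such that there exists a $k$-uniform hypergraph on $n$ vertices with independence number less than $\alpha$ and no loose path of length two, i.e., no two edges intersecting in exactly one vertex. (The independence number is the largest size of a vertex set containing no edge.) *)

theory Defs
  imports Main
begin

definition k_uniform :: "nat \<Rightarrow> 'a set \<Rightarrow> 'a set set \<Rightarrow> bool" where
  "k_uniform k V E \<longleftrightarrow> (\<forall>e\<in>E. e \<subseteq> V \<and> card e = k)"

definition no_loose_path2 :: "'a set set \<Rightarrow> bool" where
  "no_loose_path2 E \<longleftrightarrow> (\<forall>e\<in>E. \<forall>f\<in>E. e \<noteq> f \<longrightarrow> card (e \<inter> f) \<noteq> 1)"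

definition independent_set :: "'a set \<Rightarrow> 'a set set \<Rightarrow> 'a set \<Rightarrow> bool" where
  "independent_set V E S \<longleftrightarrow> S \<subseteq> V \<and> (\<forall>e\<in>E. \<not> e \<subseteq> S)"

definition indep_num_less :: "'a set \<Rightarrow> 'a set set \<Rightarrow> nat \<Rightarrow> bool" where
  "indep_num_less V E \<alpha> \<longleftrightarrow> (\<forall>S. independent_set V E S \<longrightarrow> card S < \<alpha>)"

definition tau :: "nat \<Rightarrow> nat \<Rightarrow> nat" where
  "tau k \<alpha> = (GREATEST n. \<exists>E :: nat set set.
      k_uniform k {..<n} E \<and> indep_num_less {..<n} E \<alpha> \<and> no_loose_path2 E)"

end

theory Submission
  imports Defs
begin

text \<open>Upper bound: take a maximum independent set I. Every vertex x outside I lies in an edge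
  e_x \<subseteq> I \<union> {x}. Removing the sets e_x - {x} from V leaves an independent set J: an edge
  f \<subseteq> J contains some x \<notin> I and then meets e_x exactly in x, so f = e_x, which is impossible
  as e_x has a second vertex outside J. Since V = I \<union> J, we get |V| \<le> 2(\<alpha> - 1).

  Lower bound: write \<alpha> - 1 = q(k - 1) + r and take q disjoint blocks of 2(k - 1) vertices, each
  carrying all its k-subsets, plus r isolated vertices. Two k-subsets of a block share at least two
  vertices, and an independent set has at most k - 1 vertices in each block.\<close>

lemma ex_maximum_independent_set:
  assumes "finite V" and "{} \<notin> E"
  obtains I where "independent_set V E I" and "\<And>S. independent_set V E S \<Longrightarrow> card S \<le> card I"
proof -
  have "independent_set V E {}"
    using assms(2) unfolding independent_set_def by auto
  moreover have "\<forall>S. independent_set V E S \<longrightarrow> card S < Suc (card V)"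
    using assms(1) card_mono unfolding independent_set_def by (metis less_Suc_eq_le)
  ultimately show thesis
    using ex_has_greatest_nat[of "independent_set V E" "{}" card] that by blast
qed

lemma maximum_independent_set_dominates:
  assumes "finite V"
    and I: "independent_set V E I" "\<And>S. independent_set V E S \<Longrightarrow> card S \<le> card I"
    and x: "x \<in> V - I"
  shows "\<exists>e\<in>E. x \<in> e \<and> e \<subseteq> insert x I"
proof (rule ccontr)
  assume "\<not> ?thesis"
  then have "independent_set V E (insert x I)"
    using I(1) x unfolding independent_set_def by blast
  then have "card (insert x I) \<le> card I" using I(2) by blast
  moreover have "finite I" using I(1) \<open>finite V\<close> unfolding independent_set_def by (auto intro: finite_subset)
  ultimately show False using x by simp
qed

lemma independent_set_outside_dominating_edges:
  assumes "k \<ge> 2" and "k_uniform k V E" and "no_loose_path2 E" and "independent_set V E I"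
    and g: "\<And>x. x \<in> V - I \<Longrightarrow> g x \<in> E \<and> x \<in> g x \<and> g x \<subseteq> insert x I"
  shows "independent_set V E (V - (\<Union>x\<in>V - I. g x - {x}))" (is "independent_set V E ?J")
  unfolding independent_set_def
proof (intro conjI ballI notI)
  show "?J \<subseteq> V" by blast
next
  fix f assume f: "f \<in> E" "f \<subseteq> ?J"
  have "\<not> f \<subseteq> I" using \<open>independent_set V E I\<close> f(1) unfolding independent_set_def by blast
  then obtain x where x: "x \<in> f" "x \<notin> I" by blast
  then have xV: "x \<in> V - I" using f(2) by blast
  note gx = g[OF xV]
  have "f \<inter> g x = {x}" using x f(2) gx xV by blast
  then have "f = g x"
    using \<open>no_loose_path2 E\<close> f(1) gx unfolding no_loose_path2_def by fastforce
  have "card (g x) \<ge> 2" using \<open>k_uniform k V E\<close> \<open>k \<ge> 2\<close> gx unfolding k_uniform_def by auto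
  then have "\<not> g x \<subseteq> {x}" using card_mono[of "{x}" "g x"] by auto
  then obtain y where "y \<in> g x" "y \<noteq> x" by blast
  with \<open>f = g x\<close> f(2) xV show False by blast
qed

lemma card_le_twice_indep_bound:
  assumes "k \<ge> 2" and "finite V" and "k_uniform k V E"
    and "indep_num_less V E \<alpha>" and "no_loose_path2 E"
  shows "card V \<le> 2 * \<alpha> - 2"
proof -
  have "{} \<notin> E" using assms(1,3) unfolding k_uniform_def by fastforce
  then obtain I where I: "independent_set V E I" "\<And>S. independent_set V E S \<Longrightarrow> card S \<le> card I"
    using ex_maximum_independent_set \<open>finite V\<close> by blast
  obtain g where g: "\<And>x. x \<in> V - I \<Longrightarrow> g x \<in> E \<and> x \<in> g x \<and> g x \<subseteq> insert x I"
    using maximum_independent_set_dominates[OF \<open>finite V\<close> I] by metis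
  define J where "J = V - (\<Union>x\<in>V - I. g x - {x})"
  have J: "independent_set V E J"
    unfolding J_def using independent_set_outside_dominating_edges[OF assms(1,3,5) I(1) g] .
  have "V = I \<union> J" using I(1) g unfolding J_def independent_set_def by blast
  then have "card V \<le> card I + card J" by (metis card_Un_le)
  moreover have "card I < \<alpha>" "card J < \<alpha>"
    using I(1) J \<open>indep_num_less V E \<alpha>\<close> unfolding indep_num_less_def by auto
  ultimately show ?thesis by linarith
qed

definition block :: "nat \<Rightarrow> nat \<Rightarrow> nat set" where
  "block m b = {b * m..<b * m + m}"

definition disjoint_cliques :: "nat \<Rightarrow> nat \<Rightarrow> nat \<Rightarrow> nat set set" where
  "disjoint_cliques k m q = {e. \<exists>b<q. e \<subseteq> block m b \<and> card e = k}"

lemma finite_block [simp]: "finite (block m b)"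
  by (simp add: block_def)

lemma card_block [simp]: "card (block m b) = m"
  by (simp add: block_def)

lemma block_disjoint: "b \<noteq> c \<Longrightarrow> block m b \<inter> block m c = {}"
proof -
  have "v div m = b" if "v \<in> block m b" for v b
    using that unfolding block_def by (intro div_nat_eqI) (auto simp: algebra_simps)
  then show "b \<noteq> c \<Longrightarrow> block m b \<inter> block m c = {}" by blast
qed

lemma UN_block: "(\<Union>b<q. block m b) = {..<q * m}"
proof (intro equalityI subsetI)
  fix v assume "v \<in> (\<Union>b<q. block m b)"
  then obtain b where "b < q" "v < b * m + m" unfolding block_def by auto
  moreover have "b * m + m \<le> q * m" using \<open>b < q\<close> by (metis Suc_leI add.commute mult_Suc mult_le_mono1)
  ultimately show "v \<in> {..<q * m}" by simp
next
  fix v assume "v \<in> {..<q * m}"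
  then have "m > 0" and "v div m < q" by (auto intro: gr0I less_mult_imp_div_less)
  moreover have "v \<in> block m (v div m)"
    using \<open>m > 0\<close> unfolding block_def
    by (metis atLeastLessThan_iff add.commute div_times_less_eq_dividend dividend_less_div_times)
  ultimately show "v \<in> (\<Union>b<q. block m b)" by blast
qed

lemma two_le_card_Int_of_subsets:
  assumes "finite A" and "card A \<le> 2 * (k - 1)" and "e \<subseteq> A" "f \<subseteq> A" and "card e = k" "card f = k"
    and "k \<ge> 1"
  shows "2 \<le> card (e \<inter> f)"
proof -
  have "card e + card f = card (e \<union> f) + card (e \<inter> f)"
    using assms(1,3,4) by (intro card_Un_Int) (auto intro: finite_subset)
  moreover have "card (e \<union> f) \<le> card A" using assms(1,3,4) by (intro card_mono) auto
  ultimately show ?thesis using assms(2,5-7) by linarith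
qed

lemma disjoint_cliques_k_uniform: "k_uniform k {..<q * m + r} (disjoint_cliques k m q)"
  unfolding k_uniform_def
proof
  fix e assume "e \<in> disjoint_cliques k m q"
  then obtain b where "b < q" "e \<subseteq> block m b" "card e = k"
    unfolding disjoint_cliques_def by blast
  moreover have "block m b \<subseteq> {..<q * m}"
    using \<open>b < q\<close> UN_block[where q = q and m = m] by blast
  ultimately show "e \<subseteq> {..<q * m + r} \<and> card e = k" by auto
qed

lemma disjoint_cliques_no_loose_path2:
  assumes "k \<ge> 1" and "m \<le> 2 * (k - 1)"
  shows "no_loose_path2 (disjoint_cliques k m q)"
  unfolding no_loose_path2_def
proof (intro ballI impI)
  fix e f assume "e \<in> disjoint_cliques k m q" "f \<in> disjoint_cliques k m q"
  then obtain b c where e: "e \<subseteq> block m b" "card e = k" and f: "f \<subseteq> block m c" "card f = k"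
    unfolding disjoint_cliques_def by blast
  show "card (e \<inter> f) \<noteq> 1"
  proof (cases "b = c")
    case True
    then show ?thesis using two_le_card_Int_of_subsets[of "block m b" k e f] e f assms by simp
  next
    case False
    then have "e \<inter> f = {}" using block_disjoint e(1) f(1) by blast
    then show ?thesis by simp
  qed
qed

lemma card_block_Int_independent_set:
  assumes "independent_set V (disjoint_cliques k m q) S" and "b < q"
  shows "card (S \<inter> block m b) \<le> k - 1"
proof (rule ccontr)
  assume "\<not> ?thesis"
  then have "k \<le> card (S \<inter> block m b)" by linarith
  then obtain e where "e \<subseteq> S \<inter> block m b" "card e = k"
    by (rule obtain_subset_with_card_n)
  then have "e \<in> disjoint_cliques k m q" "e \<subseteq> S"
    using \<open>b < q\<close> unfolding disjoint_cliques_def by auto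
  then show False using assms(1) unfolding independent_set_def by blast
qed

lemma disjoint_cliques_indep_num_less:
  "indep_num_less {..<q * m + r} (disjoint_cliques k m q) (q * (k - 1) + r + 1)"
  unfolding indep_num_less_def
proof (intro allI impI)
  fix S assume S: "independent_set {..<q * m + r} (disjoint_cliques k m q) S"
  have "S \<subseteq> {..<q * m} \<union> {q * m..<q * m + r}"
    using S unfolding independent_set_def by auto
  then have "S \<subseteq> (\<Union>b<q. S \<inter> block m b) \<union> {q * m..<q * m + r}"
    unfolding UN_block[where q = q and m = m, symmetric] by blast
  then have "card S \<le> card ((\<Union>b<q. S \<inter> block m b) \<union> {q * m..<q * m + r})"
    by (rule card_mono[rotated]) simp
  also have "\<dots> \<le> card (\<Union>b<q. S \<inter> block m b) + r"
    using card_Un_le[of "\<Union>b<q. S \<inter> block m b" "{q * m..<q * m + r}"] by simp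
  also have "card (\<Union>b<q. S \<inter> block m b) \<le> (\<Sum>b<q. card (S \<inter> block m b))"
    by (rule card_UN_le) simp
  also have "\<dots> \<le> q * (k - 1)"
    using sum_bounded_above[of "{..<q}" "\<lambda>b. card (S \<inter> block m b)" "k - 1"]
      card_block_Int_independent_set[OF S] by simp
  finally show "card S < q * (k - 1) + r + 1" by simp
qed

theorem proposition1p6:
  fixes k \<alpha> :: nat
  assumes "k \<ge> 2" and "\<alpha> \<ge> k"
  shows "\<alpha> - 1 + (k - 1) * ((\<alpha> - 1) div (k - 1)) \<le> tau k \<alpha> \<and> tau k \<alpha> \<le> 2 * \<alpha> - 2"
proof -
  define P where "P n \<longleftrightarrow> (\<exists>E :: nat set set.
      k_uniform k {..<n} E \<and> indep_num_less {..<n} E \<alpha> \<and> no_loose_path2 E)" for n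
  have tau: "tau k \<alpha> = Greatest P" unfolding tau_def P_def ..
  have bounded: "n \<le> 2 * \<alpha> - 2" if "P n" for n
    using that card_le_twice_indep_bound[OF assms(1)] unfolding P_def by fastforce
  define q r where "q = (\<alpha> - 1) div (k - 1)" and "r = (\<alpha> - 1) mod (k - 1)"
  have \<alpha>: "\<alpha> = q * (k - 1) + r + 1"
    unfolding q_def r_def using assms div_mult_mod_eq[of "\<alpha> - 1" "k - 1"] by linarith
  have "P (q * (2 * (k - 1)) + r)"
    unfolding P_def using \<alpha> assms(1) disjoint_cliques_k_uniform disjoint_cliques_indep_num_less
      disjoint_cliques_no_loose_path2[of k "2 * (k - 1)"] by fastforce
  moreover have "\<alpha> - 1 + (k - 1) * q = q * (2 * (k - 1)) + r" using \<alpha> by simp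
  ultimately have "\<alpha> - 1 + (k - 1) * q \<le> tau k \<alpha>" and "tau k \<alpha> \<le> 2 * \<alpha> - 2"
    unfolding tau using Greatest_le_nat GreatestI_nat bounded by metis+
  then show ?thesis unfolding q_def ..
qed

end
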